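(* Let $\{G_n\}_{n\ge1}$ be a sequence of graphs with $|V(G_n)|\to\infty$ and $N(H,G_n)>0$ for all $n$, let $H$ be a fixed connected graph, and let $p_n\in(0,1)$ satisfy $\limsup_{n\to\infty}p_n<1$. Then the Horvitz–Thompson estimator $\hat N(H,G_n)$ is consistent for $N(H,G_n)$, i.e. $\hat N(H,G_n)/N(H,G_n)\to1$ in probability, if and only if for every $\varepsilon>0$, $$\lim_{n\to\infty}\frac{1}{N(H,G_n)}\sum_{\substack{A\subset V(G_n)\\ 1\le|A|\le|V(H)|}} t_H(A)\,\mathbf 1\{t_H(A)>\varepsilon\, p_n^{|A|}N(H,G_n)\}=0.$$
   Context: $G_n$ is a simple, labeled, undirected graph with vertex set $V(G_n)=\{1,\dots,|V(G_n)|\}$ and adjacency matrix $(a_{ij})$. $H=(V(H),E(H))$ is a fixed connected graph with $V(H)=\{1,\dots,|V(H)|\}$, and $|Aut(H)|$ is the number of its automorphisms. For $k\ge1$, $V(G_n)_k$ denotes the set of $k$-tuples $\mathbf s=(s_1,\dots,s_k)$ of distinct vertices of $G_n$, and $\bar{\mathbf s}$ the set of entries of $\mathbf s$. For $\mathbf s\in V(G_n)_{|V(H)|}$ let $M_H(\mathbf s)=\prod_{(i,j)\in E(H)}a_{s_is_j}$, and $N(H,G_n)=\frac1{|Aut(H)|}\sum_{\mathbf s\in V(G_n)_{|V(H)|}}M_H(\mathbf s)$ (the number of copies of $H$ in $G_n$). Subgraph sampling: $\{X_v\}_{v\in V(G_n)}$ are i.i.d. Bernoulli$(p_n)$, $X_{\mathbf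 s}=\prod_{u=1}^{|V(H)|}X_{s_u}$, $T(H,G_n)=\frac1{|Aut(H)|}\sum_{\mathbf s\in V(G_n)_{|V(H)|}}M_H(\mathbf s)X_{\mathbf s}$, and $\hat N(H,G_n)=p_n^{-|V(H)|}T(H,G_n)$. For $A\subset V(G_n)$ with $|A|\le|V(H)|$, the local count is $t_H(A)=\frac1{|Aut(H)|}\sum_{\mathbf s\in V(G_n)_{|V(H)|}:\,\bar{\mathbf s}\supseteq A}M_H(\mathbf s)$. *)

theory Defs
  imports "HOL-Probability.Probability" "HOL-Combinatorics.Permutations"
begin

definition simple_graph :: "nat \<Rightarrow> (nat \<Rightarrow> nat \<Rightarrow> bool) \<Rightarrow> bool" where
  "simple_graph m a \<longleftrightarrow> (\<forall>i\<in>{1..m}. \<forall>j\<in>{1..m}. (a i j \<longleftrightarrow> a j i) \<and> \<not> a i i)"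

definition connected_graph :: "nat \<Rightarrow> (nat \<Rightarrow> nat \<Rightarrow> bool) \<Rightarrow> bool" where
  "connected_graph k h \<longleftrightarrow> simple_graph k h \<and> 1 \<le> k \<and>
     (\<forall>i\<in>{1..k}. \<forall>j\<in>{1..k}. (\<lambda>x y. x \<in> {1..k} \<and> y \<in> {1..k} \<and> h x y)\<^sup>*\<^sup>* i j)"

definition edges :: "nat \<Rightarrow> (nat \<Rightarrow> nat \<Rightarrow> bool) \<Rightarrow> (nat \<times> nat) set" where
  "edges k h = {(i,j). i \<in> {1..k} \<and> j \<in> {1..k} \<and> i < j \<and> h i j}"

definition aut_count :: "nat \<Rightarrow> (nat \<Rightarrow> nat \<Rightarrow> bool) \<Rightarrow> nat" where
  "aut_count k h = card {\<sigma>. \<sigma> permutes {1..k} \<and>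
      (\<forall>i\<in>{1..k}. \<forall>j\<in>{1..k}. h (\<sigma> i) (\<sigma> j) \<longleftrightarrow> h i j)}"

definition tuples :: "nat \<Rightarrow> nat \<Rightarrow> (nat \<Rightarrow> nat) set" where
  "tuples k m = {s \<in> {1..k} \<rightarrow>\<^sub>E {1..m}. inj_on s {1..k}}"

definition MH :: "nat \<Rightarrow> (nat \<Rightarrow> nat \<Rightarrow> bool) \<Rightarrow> (nat \<Rightarrow> nat \<Rightarrow> bool) \<Rightarrow> (nat \<Rightarrow> nat) \<Rightarrow> real" where
  "MH k h a s = (\<Prod>(i,j)\<in>edges k h. if a (s i) (s j) then 1 else 0)"

definition NHG :: "nat \<Rightarrow> (nat \<Rightarrow> nat \<Rightarrow> bool) \<Rightarrow> nat \<Rightarrow> (nat \<Rightarrow> nat \<Rightarrow> bool) \<Rightarrow> real" where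
  "NHG k h m a = (1 / real (aut_count k h)) * (\<Sum>s\<in>tuples k m. MH k h a s)"

definition sampling :: "nat \<Rightarrow> real \<Rightarrow> (nat \<Rightarrow> bool) pmf" where
  "sampling m p = Pi_pmf {1..m} False (\<lambda>_. bernoulli_pmf p)"

definition THG :: "nat \<Rightarrow> (nat \<Rightarrow> nat \<Rightarrow> bool) \<Rightarrow> nat \<Rightarrow> (nat \<Rightarrow> nat \<Rightarrow> bool) \<Rightarrow> (nat \<Rightarrow> bool) \<Rightarrow> real" where
  "THG k h m a X = (1 / real (aut_count k h)) *
     (\<Sum>s\<in>tuples k m. MH k h a s * (\<Prod>u\<in>{1..k}. if X (s u) then 1 else 0))"

definition HT_est :: "nat \<Rightarrow> (nat \<Rightarrow> nat \<Rightarrow> bool) \<Rightarrow> nat \<Rightarrow> (nat \<Rightarrow> nat \<Rightarrow> bool) \<Rightarrow> real \<Rightarrow> (nat \<Rightarrow> bool) \<Rightarrow> real" where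
  "HT_est k h m a p X = THG k h m a X / p ^ k"

definition local_count :: "nat \<Rightarrow> (nat \<Rightarrow> nat \<Rightarrow> bool) \<Rightarrow> nat \<Rightarrow> (nat \<Rightarrow> nat \<Rightarrow> bool) \<Rightarrow> nat set \<Rightarrow> real" where
  "local_count k h m a A = (1 / real (aut_count k h)) *
     (\<Sum>s\<in>{s\<in>tuples k m. A \<subseteq> s ` {1..k}}. MH k h a s)"

end

theory Submission
  imports Defs
begin

text \<open>
  Index the copies of \<open>H\<close> by tuples \<open>t\<close> with vertex set \<open>V t\<close> of size \<open>k\<close> and weight
  \<open>w t = M_H(t)/|Aut(H)|\<close>; then \<open>N = \<Sum> w t\<close>, the Horvitz--Thompson estimator is
  \<open>\<Sum> w t 1{V t sampled} / p^k\<close>, its mean is \<open>N\<close>, and \<open>t_H(A)\<close> is the weight of the copies whose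
  vertex set contains \<open>A\<close>. Call \<open>A\<close> heavy if \<open>t_H(A) > \<epsilon> p^|A| N\<close>.

  Sufficiency: two copies sharing exactly the vertex set \<open>B\<close> have covariance \<open>p^-|B| - 1\<close>, so the
  copies without heavy nonempty vertex subsets contribute variance at most \<open>2^k \<epsilon> N^2\<close>
  (Chebyshev), while the remaining copies have total weight at most the heavy mass (Markov).

  Necessity: let \<open>E_F\<close> be the event that some member of a family \<open>F\<close> of vertex sets is fully
  sampled. By Harris' inequality each copy's indicator is positively correlated with \<open>E_F\<close>, so the
  weight \<open>N_F\<close> of the copies containing a member of \<open>F\<close> satisfies
  \<open>N_F (1 - P(E_F)) \<le> E[(N_hat - N) 1_{E_F}] \<le> N (\<delta> + P(|N_hat/N - 1| > \<delta>))\<close>. As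
  \<open>P(E_F) \<le> \<Sum>_{A\<in>F} p^|A|\<close>, and a small error probability forces \<open>p^|A| \<le> 1/4\<close> for every heavy
  \<open>A\<close>, the heavy sets can be grouped greedily into \<open>O(2^k/\<epsilon>)\<close> families with
  \<open>\<Sum> p^|A| \<le> 1/2\<close>, each carrying local count \<open>O(2^k N (\<delta> + P(|N_hat/N - 1| > \<delta>)))\<close>.
\<close>

section \<open>Bernoulli vertex sampling\<close>

abbreviation bernoulli_sample :: "'a set \<Rightarrow> real \<Rightarrow> ('a \<Rightarrow> bool) pmf" where
  "bernoulli_sample I q \<equiv> Pi_pmf I False (\<lambda>_. bernoulli_pmf q)"

lemma finite_set_pmf_bernoulli_sample: "finite I \<Longrightarrow> finite (set_pmf (bernoulli_sample I q))"
  by (subst set_Pi_pmf) (auto intro!: finite_PiE_dflt)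

definition some_fully_sampled :: "'a set set \<Rightarrow> ('a \<Rightarrow> bool) set" where
  "some_fully_sampled F = {X. \<exists>A\<in>F. \<forall>v\<in>A. X v}"

lemma mono_indicator_some_fully_sampled: "mono (indicator (some_fully_sampled F) :: _ \<Rightarrow> real)"
  by (auto simp: mono_def le_fun_def indicator_def some_fully_sampled_def)

context
  fixes I :: "'a set" and q :: real
  assumes finite_I: "finite I" and q_nonneg: "0 \<le> q" and q_le_1: "q \<le> 1"
begin

lemma integrable_bernoulli_sample [simp]:
  "integrable (measure_pmf (bernoulli_sample I q)) (f :: ('a \<Rightarrow> bool) \<Rightarrow> real)"
  by (rule integrable_measure_pmf_finite[OF finite_set_pmf_bernoulli_sample[OF finite_I]])

lemma expectation_bernoulli_sample_split:
  assumes "v \<in> I"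
  shows "measure_pmf.expectation (bernoulli_sample I q) f =
      q * measure_pmf.expectation (bernoulli_sample (I - {v}) q) (\<lambda>X. f (X(v := True)))
    + (1 - q) * measure_pmf.expectation (bernoulli_sample (I - {v}) q) (\<lambda>X. f (X(v := False)))"
proof -
  let ?R = "bernoulli_sample (I - {v}) q"
  have "bernoulli_sample I q = bernoulli_pmf q \<bind> (\<lambda>b. map_pmf (\<lambda>X. X(v := b)) ?R)"
    using assms finite_I Pi_pmf_insert'[of "I - {v}" v False "\<lambda>_. bernoulli_pmf q"]
    by (simp add: insert_absorb map_pmf_def)
  also have "measure_pmf.expectation \<dots> f =
      (\<Sum>b\<in>UNIV. pmf (bernoulli_pmf q) b * measure_pmf.expectation (map_pmf (\<lambda>X. X(v := b)) ?R) f)"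
    by (subst pmf_expectation_bind[where A = UNIV])
       (auto intro: finite_set_pmf_bernoulli_sample finite_I)
  also have "\<dots> = q * measure_pmf.expectation ?R (\<lambda>X. f (X(v := True)))
    + (1 - q) * measure_pmf.expectation ?R (\<lambda>X. f (X(v := False)))"
    using q_nonneg q_le_1
    by (simp only: UNIV_bool sum.insert sum.empty finite.intros integral_map_pmf
      pmf_bernoulli_True pmf_bernoulli_False) simp
  finally show ?thesis .
qed

lemma expectation_of_bool_mult:
  assumes "v \<in> I"
  shows "measure_pmf.expectation (bernoulli_sample I q) (\<lambda>X. of_bool (X v) * f X) =
    q * measure_pmf.expectation (bernoulli_sample I q) (\<lambda>X. f (X(v := True)))"
  using expectation_bernoulli_sample_split[OF assms, of "\<lambda>X. of_bool (X v) * f X"]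
    expectation_bernoulli_sample_split[OF assms, of "\<lambda>X. f (X(v := True))"]
  by (simp add: algebra_simps)

lemma expectation_all_sampled_mult:
  assumes "C \<subseteq> I"
  shows "measure_pmf.expectation (bernoulli_sample I q) (\<lambda>X. of_bool (\<forall>v\<in>C. X v) * f X) =
    q ^ card C * measure_pmf.expectation (bernoulli_sample I q) (\<lambda>X. f (\<lambda>v. X v \<or> v \<in> C))"
proof -
  have "finite C" using assms finite_I finite_subset by blast
  then show ?thesis using assms
  proof (induction C arbitrary: f rule: finite_induct)
    case empty
    then show ?case by simp
  next
    case (insert v C)
    let ?E = "measure_pmf.expectation (bernoulli_sample I q)"
    have "?E (\<lambda>X. of_bool (\<forall>u\<in>insert v C. X u) * f X) =
        ?E (\<lambda>X. of_bool (X v) * (of_bool (\<forall>u\<in>C. X u) * f X))"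
      by (simp add: of_bool_conj mult.assoc)
    also have "\<dots> = q * ?E (\<lambda>X. of_bool (\<forall>u\<in>C. (X(v := True)) u) * f (X(v := True)))"
      using insert by (intro expectation_of_bool_mult) auto
    also have "\<dots> = q * ?E (\<lambda>X. of_bool (\<forall>u\<in>C. X u) * f (X(v := True)))"
      using insert.hyps
      by (intro arg_cong2[where f = "(*)"] refl Bochner_Integration.integral_cong) auto
    also have "\<dots> = q * (q ^ card C * ?E (\<lambda>X. f ((\<lambda>u. X u \<or> u \<in> C)(v := True))))"
      using insert by simp
    also have "(\<lambda>X. f ((\<lambda>u. X u \<or> u \<in> C)(v := True))) = (\<lambda>X. f (\<lambda>u. X u \<or> u \<in> insert v C))"
      by (intro ext arg_cong[where f = f]) auto
    finally show ?case
      using insert by simp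
  qed
qed

lemma expectation_all_sampled:
  "C \<subseteq> I \<Longrightarrow> measure_pmf.expectation (bernoulli_sample I q) (\<lambda>X. of_bool (\<forall>v\<in>C. X v)) = q ^ card C"
  using expectation_all_sampled_mult[of C "\<lambda>_. 1"] by simp

lemma prob_all_sampled:
  assumes "C \<subseteq> I"
  shows "measure_pmf.prob (bernoulli_sample I q) {X. \<forall>v\<in>C. X v} = q ^ card C"
proof -
  have "measure_pmf.prob (bernoulli_sample I q) {X. \<forall>v\<in>C. X v} =
      measure_pmf.expectation (bernoulli_sample I q) (indicator {X. \<forall>v\<in>C. X v})"
    by simp
  also have "indicator {X. \<forall>v\<in>C. X v} = (\<lambda>X. of_bool (\<forall>v\<in>C. X v) :: real)"
    by (auto simp: indicator_def)
  finally show ?thesis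
    using expectation_all_sampled[OF assms] by simp
qed

lemma harris_all_sampled:
  assumes "C \<subseteq> I" and "mono g"
  shows "q ^ card C * measure_pmf.expectation (bernoulli_sample I q) g
    \<le> measure_pmf.expectation (bernoulli_sample I q) (\<lambda>X. of_bool (\<forall>v\<in>C. X v) * g X)"
proof -
  have "measure_pmf.expectation (bernoulli_sample I q) g
      \<le> measure_pmf.expectation (bernoulli_sample I q) (\<lambda>X. g (\<lambda>v. X v \<or> v \<in> C))"
    by (intro integral_mono integrable_bernoulli_sample monoD[OF \<open>mono g\<close>]) (auto simp: le_fun_def)
  then show ?thesis
    using expectation_all_sampled_mult[OF \<open>C \<subseteq> I\<close>] q_nonneg by (simp add: mult_left_mono)
qed

lemma prob_some_fully_sampled_le:
  assumes "finite F" "\<And>A. A \<in> F \<Longrightarrow> A \<subseteq> I"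
  shows "measure_pmf.prob (bernoulli_sample I q) (some_fully_sampled F) \<le> (\<Sum>A\<in>F. q ^ card A)"
proof -
  have "some_fully_sampled F = (\<Union>A\<in>F. {X. \<forall>v\<in>A. X v})"
    unfolding some_fully_sampled_def by auto
  then have "measure_pmf.prob (bernoulli_sample I q) (some_fully_sampled F)
      \<le> (\<Sum>A\<in>F. measure_pmf.prob (bernoulli_sample I q) {X. \<forall>v\<in>A. X v})"
    using assms(1) by (simp add: measure_pmf.finite_measure_subadditive_finite)
  also have "\<dots> = (\<Sum>A\<in>F. q ^ card A)"
    using assms by (intro sum.cong refl prob_all_sampled) auto
  finally show ?thesis .
qed

end

section \<open>Tail bounds, greedy grouping and limits\<close>

lemma deviation_sum_subset:
  fixes U W :: "'a \<Rightarrow> real"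
  assumes "\<And>x. 0 \<le> W x" "0 \<le> \<nu>" "\<nu> \<le> c / 4"
  shows "{x. c < \<bar>U x + W x - (\<mu> + \<nu>)\<bar>} \<subseteq> {x. c / 4 \<le> \<bar>U x - \<mu>\<bar>} \<union> {x. c / 2 \<le> W x}"
proof (rule subsetI, rule ccontr)
  fix x assume "x \<in> {x. c < \<bar>U x + W x - (\<mu> + \<nu>)\<bar>}" "x \<notin> {x. c / 4 \<le> \<bar>U x - \<mu>\<bar>} \<union> {x. c / 2 \<le> W x}"
  then show False
    using assms(1)[of x] assms(2,3) by (simp add: abs_if split: if_splits)
qed

lemma prob_deviation_sum_le:
  fixes M :: "'a pmf" and U W :: "'a \<Rightarrow> real"
  assumes fin: "finite (set_pmf M)" and W_nonneg: "\<And>x. 0 \<le> W x" and c: "0 < c"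
  defines "E \<equiv> measure_pmf.expectation M"
  shows "measure_pmf.prob M {x. c < \<bar>U x + W x - (E U + E W)\<bar>}
    \<le> 16 * E (\<lambda>x. (U x - E U)\<^sup>2) / c\<^sup>2 + 4 * E W / c"
proof -
  have int: "integrable M f" for f :: "'a \<Rightarrow> real"
    by (rule integrable_measure_pmf_finite[OF fin])
  have var_nonneg: "0 \<le> 16 * E (\<lambda>x. (U x - E U)\<^sup>2) / c\<^sup>2"
    unfolding E_def
    by (intro divide_nonneg_pos mult_nonneg_nonneg Bochner_Integration.integral_nonneg)
       (use c in auto)
  have EW_nonneg: "0 \<le> E W"
    unfolding E_def by (intro Bochner_Integration.integral_nonneg W_nonneg)
  show ?thesis
  proof (cases "E W \<le> c / 4")
    case False
    then have "1 \<le> 4 * E W / c"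
      using c by (simp add: field_simps)
    then show ?thesis
      using var_nonneg measure_pmf.prob_le_1[of M "{x. c < \<bar>U x + W x - (E U + E W)\<bar>}"] by linarith
  next
    case True
    have "measure_pmf.prob M {x. c < \<bar>U x + W x - (E U + E W)\<bar>}
        \<le> measure_pmf.prob M ({x. c / 4 \<le> \<bar>U x - E U\<bar>} \<union> {x. c / 2 \<le> W x})"
      using True W_nonneg EW_nonneg
      by (intro measure_pmf.finite_measure_mono deviation_sum_subset) auto
    also have "\<dots> \<le> measure_pmf.prob M {x. c / 4 \<le> \<bar>U x - E U\<bar>} + measure_pmf.prob M {x. c / 2 \<le> W x}"
      by (rule measure_Un_le) simp_all
    also have "measure_pmf.prob M {x. c / 4 \<le> \<bar>U x - E U\<bar>} \<le> E (\<lambda>x. (U x - E U)\<^sup>2) / (c / 4)\<^sup>2"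
      using measure_pmf.second_moment_method[of "\<lambda>x. U x - E U" M "c / 4"] c
      unfolding E_def by (simp add: int)
    also have "measure_pmf.prob M {x. c / 2 \<le> W x} \<le> E W / (c / 2)"
      using integral_Markov_inequality_measure[of M W UNIV "c / 2"] c W_nonneg
      unfolding E_def by (simp add: int)
    also have "E (\<lambda>x. (U x - E U)\<^sup>2) / (c / 4)\<^sup>2 = 16 * E (\<lambda>x. (U x - E U)\<^sup>2) / c\<^sup>2"
      by (simp add: power_divide)
    also have "E W / (c / 2) \<le> 4 * E W / c"
      using c EW_nonneg by (simp add: field_simps)
    finally show ?thesis
      by simp
  qed
qed

lemma expectation_excess_on_event_le:
  fixes M :: "'a pmf" and Z :: "'a \<Rightarrow> real"
  assumes fin: "finite (set_pmf M)" and Z_nonneg: "\<And>x. 0 \<le> Z x"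
    and mean: "measure_pmf.expectation M Z = \<mu>" and \<mu>: "0 < \<mu>" and \<delta>: "0 \<le> \<delta>"
  shows "measure_pmf.expectation M (\<lambda>x. (Z x - \<mu>) * indicator S x)
    \<le> \<mu> * (\<delta> + measure_pmf.prob M {x. \<delta> < \<bar>Z x / \<mu> - 1\<bar>})"
proof -
  let ?E = "measure_pmf.expectation M" and ?D = "{x. \<delta> < \<bar>Z x / \<mu> - 1\<bar>}"
  have int: "integrable M f" for f :: "'a \<Rightarrow> real"
    by (rule integrable_measure_pmf_finite[OF fin])
  have shortfall_le: "(\<mu> - Z x) * indicator (- S) x \<le> \<mu> * \<delta> + \<mu> * indicator ?D x" for x
  proof (cases "x \<in> ?D")
    case True
    moreover have "0 \<le> \<mu> * \<delta>"
      using \<mu> \<delta> by simp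
    ultimately show ?thesis
      using Z_nonneg[of x] \<mu> by (auto simp: indicator_def)
  next
    case False
    then have "\<bar>Z x - \<mu>\<bar> \<le> \<delta> * \<mu>"
      using \<mu> by (simp add: abs_divide field_simps divide_le_eq)
    then show ?thesis
      using False \<mu> \<delta> by (auto simp: indicator_def algebra_simps)
  qed
  have "(\<lambda>x. (Z x - \<mu>) * indicator S x) = (\<lambda>x. (Z x - \<mu>) + (\<mu> - Z x) * indicator (- S) x)"
    by (auto simp: indicator_def)
  then have "?E (\<lambda>x. (Z x - \<mu>) * indicator S x)
      = ?E (\<lambda>x. Z x - \<mu>) + ?E (\<lambda>x. (\<mu> - Z x) * indicator (- S) x)"
    by (simp add: int)
  also have "?E (\<lambda>x. Z x - \<mu>) = 0"
    using mean by (simp add: int)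
  also have "?E (\<lambda>x. (\<mu> - Z x) * indicator (- S) x) \<le> ?E (\<lambda>x. \<mu> * \<delta> + \<mu> * indicator ?D x)"
    by (intro integral_mono int shortfall_le)
  also have "\<dots> = \<mu> * (\<delta> + measure_pmf.prob M ?D)"
    by (simp add: int algebra_simps)
  finally show ?thesis
    by simp
qed

lemma exists_subset_sum_between:
  fixes \<omega> :: "'a \<Rightarrow> real"
  assumes "finite B" "\<And>x. x \<in> B \<Longrightarrow> 0 \<le> \<omega> x \<and> \<omega> x \<le> 1/4" "1/4 \<le> sum \<omega> B"
  shows "\<exists>F\<subseteq>B. 1/4 \<le> sum \<omega> F \<and> sum \<omega> F \<le> 1/2"
  using assms
proof (induction B rule: finite_induct)
  case empty
  then show ?case by simp
next
  case (insert x B)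
  show ?case
  proof (cases "1/4 \<le> sum \<omega> B")
    case True
    then obtain F where "F \<subseteq> B" "1/4 \<le> sum \<omega> F" "sum \<omega> F \<le> 1/2"
      using insert.IH insert.prems(1) by auto
    then show ?thesis
      by blast
  next
    case False
    moreover have "\<omega> x \<le> 1/4"
      using insert.prems(1) by simp
    ultimately have "sum \<omega> (insert x B) \<le> 1/2"
      using insert.hyps by simp
    then show ?thesis
      using insert.prems(2) by blast
  qed
qed

lemma sum_le_by_light_subsets:
  fixes \<omega> \<tau> :: "'a \<Rightarrow> real"
  assumes "finite B" and \<omega>: "\<And>x. x \<in> B \<Longrightarrow> 0 \<le> \<omega> x \<and> \<omega> x \<le> 1/4"
    and light: "\<And>F. F \<subseteq> B \<Longrightarrow> sum \<omega> F \<le> 1/2 \<Longrightarrow> sum \<tau> F \<le> M" and "0 \<le> M"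
  shows "sum \<tau> B \<le> (4 * sum \<omega> B + 1) * M"
  using assms
proof (induction "card B" arbitrary: B rule: less_induct)
  case less
  show ?case
  proof (cases "sum \<omega> B \<le> 1/2")
    case True
    then have "sum \<tau> B \<le> M"
      using less.prems(3) by blast
    moreover have "0 \<le> sum \<omega> B * M"
      using less.prems(2,4) by (intro mult_nonneg_nonneg sum_nonneg) auto
    ultimately show ?thesis
      by (simp add: algebra_simps)
  next
    case False
    then obtain F where F: "F \<subseteq> B" "1/4 \<le> sum \<omega> F" "sum \<omega> F \<le> 1/2"
      using exists_subset_sum_between[of B \<omega>] less.prems by auto
    have "F \<noteq> {}"
      using F(2) by auto
    then have "card (B - F) < card B"
      using F(1) less.prems(1) by (intro psubset_card_mono) auto
    then have "sum \<tau> (B - F) \<le> (4 * sum \<omega> (B - F) + 1) * M"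
      using less.prems by (intro less.hyps) auto
    moreover have "sum \<tau> F \<le> M"
      using less.prems(3) F by blast
    moreover have "M \<le> 4 * sum \<omega> F * M"
      using F(2) less.prems(4) by (simp add: mult_le_cancel_right1)
    moreover have "(4 * sum \<omega> (B - F) + 1) * M = (4 * sum \<omega> B + 1) * M - 4 * sum \<omega> F * M"
      using sum.subset_diff[OF F(1) less.prems(1), of \<omega>] by (simp add: algebra_simps)
    moreover have "sum \<tau> B = sum \<tau> (B - F) + sum \<tau> F"
      using sum.subset_diff[OF F(1) less.prems(1)] .
    ultimately show ?thesis
      by linarith
  qed
qed

lemma limsup_less_imp_eventually_less:
  fixes f :: "nat \<Rightarrow> real"
  assumes "limsup (\<lambda>n. ereal (f n)) < ereal c"
  obtains c' where "c' < c" and "eventually (\<lambda>n. f n < c') sequentially"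
proof -
  obtain z where z: "limsup (\<lambda>n. ereal (f n)) < z" "z < ereal c"
    using dense[OF assms] by blast
  then obtain c' where "z = ereal c'"
    by (cases z) auto
  then show ?thesis
    using that z Limsup_lessD[OF z(1)] by auto
qed

lemma tendsto_zero_by_approximation:
  fixes f :: "nat \<Rightarrow> real" and g :: "real \<Rightarrow> real" and h :: "real \<Rightarrow> nat \<Rightarrow> real"
  assumes f_nonneg: "\<And>n. 0 \<le> f n"
    and bound: "\<forall>\<^sub>F x in at_right 0. \<forall>\<^sub>F n in sequentially. f n \<le> g x + h x n"
    and g: "(g \<longlongrightarrow> 0) (at_right 0)" and h: "\<forall>\<^sub>F x in at_right 0. h x \<longlonglongrightarrow> 0"
  shows "f \<longlonglongrightarrow> 0"
proof (rule order_tendstoI)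
  fix \<eta> :: real assume "0 < \<eta>"
  have "\<forall>\<^sub>F x in at_right 0. g x < \<eta> / 2"
    using g \<open>0 < \<eta>\<close> by (intro order_tendstoD) auto
  with bound h have "\<forall>\<^sub>F x in at_right 0.
      (\<forall>\<^sub>F n in sequentially. f n \<le> g x + h x n) \<and> g x < \<eta> / 2 \<and> h x \<longlonglongrightarrow> 0"
    by eventually_elim auto
  then obtain x where x: "\<forall>\<^sub>F n in sequentially. f n \<le> g x + h x n" "g x < \<eta> / 2" "h x \<longlonglongrightarrow> 0"
    using eventually_happens[of _ "at_right (0::real)"] by fastforce
  have "\<forall>\<^sub>F n in sequentially. h x n < \<eta> / 2"
    using x(3) \<open>0 < \<eta>\<close> by (intro order_tendstoD) auto
  with x(1) show "\<forall>\<^sub>F n in sequentially. f n < \<eta>"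
    by eventually_elim (use x(2) in auto)
next
  fix \<eta> :: real assume "\<eta> < 0"
  then have "\<eta> < f n" for n
    using f_nonneg[of n] by linarith
  then show "\<forall>\<^sub>F n in sequentially. \<eta> < f n"
    by simp
qed

section \<open>Horvitz--Thompson estimation for weighted families of k-sets\<close>

locale weighted_ksets =
  fixes I :: "'a set" and T :: "'i set" and V :: "'i \<Rightarrow> 'a set" and k :: nat and w :: "'i \<Rightarrow> real"
  assumes finite_I: "finite I" and finite_T: "finite T"
    and V_subset: "t \<in> T \<Longrightarrow> V t \<subseteq> I" and card_V: "t \<in> T \<Longrightarrow> card (V t) = k"
    and w_nonneg: "t \<in> T \<Longrightarrow> 0 \<le> w t"
begin

definition total_weight :: real where
  "total_weight = (\<Sum>t\<in>T. w t)"

definition covering_weight :: "'a set set \<Rightarrow> real" where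
  "covering_weight F = (\<Sum>t\<in>{t\<in>T. \<exists>A\<in>F. A \<subseteq> V t}. w t)"

definition estimator :: "real \<Rightarrow> ('a \<Rightarrow> bool) \<Rightarrow> real" where
  "estimator q X = (\<Sum>t\<in>T. w t * of_bool (\<forall>v\<in>V t. X v)) / q ^ k"

definition deviation_prob :: "real \<Rightarrow> real \<Rightarrow> real" where
  "deviation_prob q \<delta> =
    measure_pmf.prob (bernoulli_sample I q) {X. \<delta> < \<bar>estimator q X / total_weight - 1\<bar>}"

definition heavy_sets :: "real \<Rightarrow> real \<Rightarrow> 'a set set" where
  "heavy_sets q \<epsilon> = {A. A \<subseteq> I \<and> 1 \<le> card A \<and> card A \<le> k \<and>
     \<epsilon> * q ^ card A * total_weight < covering_weight {A}}"

definition heavy_mass :: "real \<Rightarrow> real \<Rightarrow> real" where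
  "heavy_mass q \<epsilon> = (\<Sum>A\<in>heavy_sets q \<epsilon>. covering_weight {A})"

lemma finite_V: "t \<in> T \<Longrightarrow> finite (V t)"
  using V_subset finite_I finite_subset by blast

lemma total_weight_nonneg: "0 \<le> total_weight"
  unfolding total_weight_def by (intro sum_nonneg w_nonneg)

lemma covering_weight_nonneg: "0 \<le> covering_weight F"
  unfolding covering_weight_def by (intro sum_nonneg w_nonneg) auto

lemma covering_weight_le_total_weight: "covering_weight F \<le> total_weight"
  unfolding covering_weight_def total_weight_def by (intro sum_mono2 finite_T w_nonneg) auto

lemma covering_weight_eq_sum_of_bool:
  "covering_weight F = (\<Sum>t\<in>T. w t * of_bool (\<exists>A\<in>F. A \<subseteq> V t))"
  unfolding covering_weight_def sum.inter_filter[OF finite_T] by (intro sum.cong refl) auto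

lemma sum_covering_weight_singletons:
  assumes "finite F"
  shows "(\<Sum>A\<in>F. covering_weight {A}) = (\<Sum>t\<in>T. w t * card {A\<in>F. A \<subseteq> V t})"
proof -
  have "(\<Sum>A\<in>F. covering_weight {A}) = (\<Sum>t\<in>T. \<Sum>A\<in>F. w t * of_bool (A \<subseteq> V t))"
    unfolding covering_weight_eq_sum_of_bool by (simp add: sum.swap[of _ F])
  also have "\<dots> = (\<Sum>t\<in>T. w t * card {A\<in>F. A \<subseteq> V t})"
    using assms by (simp add: sum_distrib_left[symmetric] Int_def conj_commute)
  finally show ?thesis .
qed

lemma covering_weight_le_sum_singletons:
  assumes "finite F"
  shows "covering_weight F \<le> (\<Sum>A\<in>F. covering_weight {A})"
proof -
  have "of_bool (\<exists>A\<in>F. A \<subseteq> V t) \<le> real (card {A\<in>F. A \<subseteq> V t})" for t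
    using assms by (auto simp: Suc_le_eq card_gt_0_iff)
  then show ?thesis
    unfolding sum_covering_weight_singletons[OF assms] covering_weight_eq_sum_of_bool[of F]
    by (intro sum_mono mult_left_mono w_nonneg)
qed

lemma sum_covering_weight_singletons_le:
  assumes "finite F"
  shows "(\<Sum>A\<in>F. covering_weight {A}) \<le> 2 ^ k * covering_weight F"
  unfolding sum_covering_weight_singletons[OF assms] covering_weight_eq_sum_of_bool[of F]
    sum_distrib_left
proof (intro sum_mono)
  fix t assume t: "t \<in> T"
  have "real (card {A\<in>F. A \<subseteq> V t}) \<le> 2 ^ k * of_bool (\<exists>A\<in>F. A \<subseteq> V t)"
  proof (cases "\<exists>A\<in>F. A \<subseteq> V t")
    case True
    have "card {A\<in>F. A \<subseteq> V t} \<le> card (Pow (V t))"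
      using t finite_V by (intro card_mono) auto
    then have "card {A\<in>F. A \<subseteq> V t} \<le> 2 ^ k"
      using t finite_V by (simp add: card_Pow card_V)
    then show ?thesis
      using True by (simp add: numeral_power_le_of_nat_cancel_iff)
  qed (use assms in auto)
  from mult_left_mono[OF this w_nonneg[OF t]]
  show "w t * real (card {A\<in>F. A \<subseteq> V t}) \<le> 2 ^ k * (w t * of_bool (\<exists>A\<in>F. A \<subseteq> V t))"
    by (simp add: mult_ac)
qed

lemma finite_heavy_sets: "finite (heavy_sets q \<epsilon>)"
  unfolding heavy_sets_def using finite_I by (auto intro: finite_subset[of _ "Pow I"])

lemma expectation_fully_sampled:
  assumes "t \<in> T" "0 \<le> q" "q \<le> 1"
  shows "measure_pmf.expectation (bernoulli_sample I q) (\<lambda>X. of_bool (\<forall>v\<in>V t. X v)) = q ^ k"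
  using expectation_all_sampled[OF finite_I assms(2,3) V_subset[OF assms(1)]] card_V[OF assms(1)]
  by simp

lemma expectation_weighted_sum_fully_sampled:
  assumes "S \<subseteq> T" "0 < q" "q \<le> 1"
  shows "measure_pmf.expectation (bernoulli_sample I q)
      (\<lambda>X. \<Sum>t\<in>S. w t * of_bool (\<forall>v\<in>V t. X v) / q ^ k) = (\<Sum>t\<in>S. w t)"
  using assms expectation_fully_sampled
  by (auto simp: finite_I Bochner_Integration.integral_sum intro!: sum.cong)

lemma estimator_eq_sum: "estimator q X = (\<Sum>t\<in>T. w t * of_bool (\<forall>v\<in>V t. X v) / q ^ k)"
  unfolding estimator_def by (simp add: sum_divide_distrib)

lemma expectation_estimator:
  "0 < q \<Longrightarrow> q \<le> 1 \<Longrightarrow> measure_pmf.expectation (bernoulli_sample I q) (estimator q) = total_weight"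
  unfolding estimator_eq_sum total_weight_def by (rule expectation_weighted_sum_fully_sampled) auto

lemma estimator_nonneg: "0 < q \<Longrightarrow> 0 \<le> estimator q X"
  unfolding estimator_def by (intro divide_nonneg_pos sum_nonneg mult_nonneg_nonneg w_nonneg) auto

definition light_ksets :: "real \<Rightarrow> real \<Rightarrow> 'i set" where
  "light_ksets q \<epsilon> = {t\<in>T. \<forall>A\<subseteq>V t. A \<noteq> {} \<longrightarrow> covering_weight {A} \<le> \<epsilon> * q ^ card A * total_weight}"

lemma weight_not_light_le_heavy_mass:
  "(\<Sum>t\<in>T - light_ksets q \<epsilon>. w t) \<le> heavy_mass q \<epsilon>"
proof -
  have "T - light_ksets q \<epsilon> \<subseteq> {t\<in>T. \<exists>A\<in>heavy_sets q \<epsilon>. A \<subseteq> V t}"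
  proof
    fix t assume "t \<in> T - light_ksets q \<epsilon>"
    then obtain A where t: "t \<in> T" and A: "A \<subseteq> V t" "A \<noteq> {}"
      and heavy: "\<epsilon> * q ^ card A * total_weight < covering_weight {A}"
      unfolding light_ksets_def by (auto simp: not_le)
    have "finite A"
      using A(1) finite_V[OF t] finite_subset by blast
    then have "A \<in> heavy_sets q \<epsilon>"
      unfolding heavy_sets_def
      using A heavy V_subset[OF t] card_mono[OF finite_V[OF t] A(1)] card_V[OF t]
      by (auto simp: Suc_le_eq card_gt_0_iff)
    then show "t \<in> {t\<in>T. \<exists>A\<in>heavy_sets q \<epsilon>. A \<subseteq> V t}"
      using t A(1) by auto
  qed
  then have "(\<Sum>t\<in>T - light_ksets q \<epsilon>. w t) \<le> covering_weight (heavy_sets q \<epsilon>)"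
    unfolding covering_weight_def by (intro sum_mono2 w_nonneg) (auto simp: finite_T)
  also have "\<dots> \<le> heavy_mass q \<epsilon>"
    unfolding heavy_mass_def by (rule covering_weight_le_sum_singletons[OF finite_heavy_sets])
  finally show ?thesis .
qed

lemma expectation_centered_product:
  assumes s: "s \<in> T" and t: "t \<in> T" and q: "0 < q" "q \<le> 1"
  shows "measure_pmf.expectation (bernoulli_sample I q)
      (\<lambda>X. (of_bool (\<forall>v\<in>V s. X v) / q ^ k - 1) * (of_bool (\<forall>v\<in>V t. X v) / q ^ k - 1))
    = 1 / q ^ card (V s \<inter> V t) - 1"
proof -
  let ?E = "measure_pmf.expectation (bernoulli_sample I q)"
  let ?Y = "\<lambda>t X. of_bool (\<forall>v\<in>V t. X v) :: real"
  have "(?Y s X / q ^ k - 1) * (?Y t X / q ^ k - 1)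
      = of_bool (\<forall>v\<in>V s \<union> V t. X v) / (q ^ k)\<^sup>2 - ?Y s X / q ^ k - ?Y t X / q ^ k + 1" for X
    using q by (auto simp: field_simps power2_eq_square)
  then have "?E (\<lambda>X. (?Y s X / q ^ k - 1) * (?Y t X / q ^ k - 1))
      = ?E (\<lambda>X. of_bool (\<forall>v\<in>V s \<union> V t. X v)) / (q ^ k)\<^sup>2 - ?E (?Y s) / q ^ k - ?E (?Y t) / q ^ k + 1"
    using q by (simp add: finite_I)
  also have "\<dots> = q ^ card (V s \<union> V t) / (q ^ k)\<^sup>2 - 1"
    using s t q V_subset
    by (simp add: expectation_fully_sampled expectation_all_sampled[OF finite_I])
  also have "q ^ card (V s \<union> V t) / (q ^ k)\<^sup>2 = 1 / q ^ card (V s \<inter> V t)"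
  proof -
    have "card (V s \<union> V t) + card (V s \<inter> V t) = 2 * k"
      using card_Un_Int[OF finite_V[OF s] finite_V[OF t]] card_V[OF s] card_V[OF t] by simp
    then have "q ^ card (V s \<union> V t) * q ^ card (V s \<inter> V t) = (q ^ k)\<^sup>2"
      by (simp flip: power_add power_mult add: add.commute mult.commute)
    then show ?thesis
      using q by (simp add: divide_simps)
  qed
  finally show ?thesis .
qed

lemma overlap_term_le:
  assumes s: "s \<in> T" and t: "t \<in> T" and q: "0 < q" "q \<le> 1"
  shows "w t * (1 / q ^ card (V s \<inter> V t) - 1)
    \<le> (\<Sum>A\<in>Pow (V s) - {{}}. w t * of_bool (A \<subseteq> V t) / q ^ card A)"
proof -
  have terms_nonneg: "0 \<le> w t * of_bool (A \<subseteq> V t) / q ^ card A" for A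
    using w_nonneg[OF t] q by auto
  show ?thesis
  proof (cases "V s \<inter> V t = {}")
    case True
    then show ?thesis
      by (simp add: sum_nonneg terms_nonneg)
  next
    case False
    then have "w t * of_bool (V s \<inter> V t \<subseteq> V t) / q ^ card (V s \<inter> V t)
        \<le> (\<Sum>A\<in>Pow (V s) - {{}}. w t * of_bool (A \<subseteq> V t) / q ^ card A)"
      using finite_V[OF s] by (intro member_le_sum terms_nonneg) auto
    then show ?thesis
      using w_nonneg[OF t] by (simp add: right_diff_distrib)
  qed
qed

lemma overlap_sum_le:
  assumes s: "s \<in> light_ksets q \<epsilon>" and q: "0 < q" "q \<le> 1" and \<epsilon>: "0 \<le> \<epsilon>"
  shows "(\<Sum>t\<in>T. w t * (1 / q ^ card (V s \<inter> V t) - 1)) \<le> 2 ^ k * \<epsilon> * total_weight"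
proof -
  have sT: "s \<in> T"
    using s unfolding light_ksets_def by auto
  let ?P = "Pow (V s) - {{}}"
  have "(\<Sum>t\<in>T. w t * (1 / q ^ card (V s \<inter> V t) - 1))
      \<le> (\<Sum>t\<in>T. \<Sum>A\<in>?P. w t * of_bool (A \<subseteq> V t) / q ^ card A)"
    using sT q by (intro sum_mono overlap_term_le)
  also have "\<dots> = (\<Sum>A\<in>?P. covering_weight {A} / q ^ card A)"
    unfolding covering_weight_eq_sum_of_bool
    by (subst sum.swap) (simp add: sum_divide_distrib)
  also have "\<dots> \<le> (\<Sum>A\<in>?P. \<epsilon> * total_weight)"
  proof (intro sum_mono)
    fix A assume "A \<in> ?P"
    then have "covering_weight {A} \<le> \<epsilon> * q ^ card A * total_weight"
      using s unfolding light_ksets_def by auto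
    then show "covering_weight {A} / q ^ card A \<le> \<epsilon> * total_weight"
      using q by (simp add: divide_le_eq mult_ac)
  qed
  also have "\<dots> \<le> 2 ^ k * (\<epsilon> * total_weight)"
  proof -
    have "card ?P \<le> card (Pow (V s))"
      using finite_V[OF sT] by (intro card_mono) auto
    then have "real (card ?P) \<le> 2 ^ k"
      using finite_V[OF sT] card_V[OF sT] by (simp add: card_Pow numeral_power_le_of_nat_cancel_iff)
    then show ?thesis
      using \<epsilon> total_weight_nonneg by (simp add: mult_right_mono)
  qed
  finally show ?thesis
    by (simp add: mult_ac)
qed

lemma expectation_square_deviation_eq:
  assumes S: "S \<subseteq> T" and q: "0 < q" "q \<le> 1"
  shows "measure_pmf.expectation (bernoulli_sample I q)
      (\<lambda>X. ((\<Sum>t\<in>S. w t * of_bool (\<forall>v\<in>V t. X v) / q ^ k) - (\<Sum>t\<in>S. w t))\<^sup>2)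
    = (\<Sum>s\<in>S. \<Sum>t\<in>S. w s * w t * (1 / q ^ card (V s \<inter> V t) - 1))"
proof -
  let ?Z = "\<lambda>t X. of_bool (\<forall>v\<in>V t. X v) / q ^ k - 1 :: real"
  have "((\<Sum>t\<in>S. w t * of_bool (\<forall>v\<in>V t. X v) / q ^ k) - (\<Sum>t\<in>S. w t))\<^sup>2
      = (\<Sum>s\<in>S. \<Sum>t\<in>S. w s * w t * (?Z s X * ?Z t X))" for X
  proof -
    have "(\<Sum>t\<in>S. w t * of_bool (\<forall>v\<in>V t. X v) / q ^ k) - (\<Sum>t\<in>S. w t) = (\<Sum>t\<in>S. w t * ?Z t X)"
      by (simp add: sum_subtractf algebra_simps)
    then show ?thesis
      by (simp add: power2_eq_square sum_product mult_ac)
  qed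
  then show ?thesis
    using S q
    by (simp add: finite_I Bochner_Integration.integral_sum expectation_centered_product subsetD)
qed

lemma variance_light_part_le:
  assumes q: "0 < q" "q \<le> 1" and \<epsilon>: "0 \<le> \<epsilon>"
  defines "L \<equiv> light_ksets q \<epsilon>"
  shows "measure_pmf.expectation (bernoulli_sample I q)
      (\<lambda>X. ((\<Sum>t\<in>L. w t * of_bool (\<forall>v\<in>V t. X v) / q ^ k) - (\<Sum>t\<in>L. w t))\<^sup>2)
    \<le> 2 ^ k * \<epsilon> * total_weight\<^sup>2"
proof -
  let ?c = "\<lambda>s t. 1 / q ^ card (V s \<inter> V t) - 1"
  have L: "L \<subseteq> T"
    unfolding L_def light_ksets_def by auto
  have "(\<Sum>s\<in>L. \<Sum>t\<in>L. w s * w t * ?c s t) \<le> (\<Sum>s\<in>L. w s * (\<Sum>t\<in>T. w t * ?c s t))"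
  proof (intro sum_mono)
    fix s assume "s \<in> L"
    then have "0 \<le> w s"
      using L w_nonneg by auto
    moreover have "(\<Sum>t\<in>L. w t * ?c s t) \<le> (\<Sum>t\<in>T. w t * ?c s t)"
      using q w_nonneg by (intro sum_mono2[OF finite_T L]) (auto simp: power_le_one)
    ultimately show "(\<Sum>t\<in>L. w s * w t * ?c s t) \<le> w s * (\<Sum>t\<in>T. w t * ?c s t)"
      by (simp add: sum_distrib_left mult_left_mono mult.assoc flip: sum_distrib_left)
  qed
  also have "\<dots> \<le> (\<Sum>s\<in>L. w s * (2 ^ k * \<epsilon> * total_weight))"
    using L q \<epsilon> unfolding L_def by (intro sum_mono mult_left_mono overlap_sum_le w_nonneg) auto
  also have "\<dots> \<le> total_weight * (2 ^ k * \<epsilon> * total_weight)"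
    unfolding sum_distrib_right[symmetric] total_weight_def
    using L \<epsilon> total_weight_nonneg
    by (intro mult_right_mono sum_mono2 finite_T w_nonneg) (auto simp: total_weight_def)
  finally show ?thesis
    using expectation_square_deviation_eq[OF L q] by (simp add: power2_eq_square mult_ac)
qed

theorem deviation_prob_le:
  assumes q: "0 < q" "q \<le> 1" and N: "0 < total_weight" and \<epsilon>: "0 < \<epsilon>" and \<delta>: "0 < \<delta>"
  shows "deviation_prob q \<delta> \<le> 16 * 2 ^ k * \<epsilon> / \<delta>\<^sup>2 + 4 / \<delta> * (heavy_mass q \<epsilon> / total_weight)"
proof -
  let ?E = "measure_pmf.expectation (bernoulli_sample I q)"
  define L where "L = light_ksets q \<epsilon>"
  define U where "U X = (\<Sum>t\<in>L. w t * of_bool (\<forall>v\<in>V t. X v) / q ^ k)" for X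
  define W where "W X = (\<Sum>t\<in>T - L. w t * of_bool (\<forall>v\<in>V t. X v) / q ^ k)" for X
  have L: "L \<subseteq> T"
    unfolding L_def light_ksets_def by auto
  have EU: "?E U = (\<Sum>t\<in>L. w t)" and EW: "?E W = (\<Sum>t\<in>T - L. w t)"
    unfolding U_def W_def using L q by (auto intro: expectation_weighted_sum_fully_sampled)
  have "estimator q X = U X + W X" for X
    unfolding estimator_eq_sum U_def W_def using L by (simp add: sum.subset_diff[OF _ finite_T])
  moreover have "total_weight = ?E U + ?E W"
    unfolding total_weight_def EU EW using L by (simp add: sum.subset_diff[OF _ finite_T])
  moreover have "\<delta> < \<bar>x / total_weight - 1\<bar> \<longleftrightarrow> \<delta> * total_weight < \<bar>x - total_weight\<bar>" for x
    using N by (simp add: abs_divide field_simps divide_less_eq)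
  ultimately have "deviation_prob q \<delta>
      = measure_pmf.prob (bernoulli_sample I q) {X. \<delta> * total_weight < \<bar>U X + W X - (?E U + ?E W)\<bar>}"
    unfolding deviation_prob_def by simp
  also have "\<dots> \<le> 16 * ?E (\<lambda>X. (U X - ?E U)\<^sup>2) / (\<delta> * total_weight)\<^sup>2 + 4 * ?E W / (\<delta> * total_weight)"
    using q N \<delta> unfolding W_def
    by (intro prob_deviation_sum_le finite_set_pmf_bernoulli_sample finite_I sum_nonneg)
       (auto intro!: divide_nonneg_pos w_nonneg)
  also have "\<dots> \<le> 16 * (2 ^ k * \<epsilon> * total_weight\<^sup>2) / (\<delta> * total_weight)\<^sup>2
      + 4 * heavy_mass q \<epsilon> / (\<delta> * total_weight)"
    unfolding EU EW U_def L_def using q \<epsilon> N \<delta>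
    by (intro add_mono divide_right_mono mult_left_mono variance_light_part_le
        weight_not_light_le_heavy_mass) auto
  also have "\<dots> = 16 * 2 ^ k * \<epsilon> / \<delta>\<^sup>2 + 4 / \<delta> * (heavy_mass q \<epsilon> / total_weight)"
    using N \<delta> by (simp add: field_simps power2_eq_square)
  finally show ?thesis .
qed

lemma expectation_fully_sampled_on_event_ge:
  fixes F :: "'a set set"
  assumes t: "t \<in> T" and q: "0 < q" "q \<le> 1"
  defines "S \<equiv> some_fully_sampled F"
  shows "of_bool (\<exists>A\<in>F. A \<subseteq> V t) * (1 - measure_pmf.prob (bernoulli_sample I q) S)
    \<le> measure_pmf.expectation (bernoulli_sample I q) (\<lambda>X. of_bool (\<forall>v\<in>V t. X v) * indicator S X) / q ^ k
      - measure_pmf.prob (bernoulli_sample I q) S"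
proof (cases "\<exists>A\<in>F. A \<subseteq> V t")
  case True
  then obtain A where "A \<in> F" "A \<subseteq> V t"
    by blast
  then have "(\<lambda>X. of_bool (\<forall>v\<in>V t. X v) * indicator S X) = (\<lambda>X. of_bool (\<forall>v\<in>V t. X v) :: real)"
    unfolding S_def some_fully_sampled_def indicator_def by (auto simp: fun_eq_iff) blast
  then show ?thesis
    using True t q by (simp add: expectation_fully_sampled)
next
  case False
  have "q ^ card (V t) * measure_pmf.expectation (bernoulli_sample I q) (indicator S)
      \<le> measure_pmf.expectation (bernoulli_sample I q) (\<lambda>X. of_bool (\<forall>v\<in>V t. X v) * indicator S X)"
    using q V_subset[OF t] unfolding S_def
    by (intro harris_all_sampled finite_I mono_indicator_some_fully_sampled) auto
  then show ?thesis
    using False q card_V[OF t] by (simp add: field_simps)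
qed

lemma covering_weight_shortfall_le:
  fixes F :: "'a set set"
  assumes q: "0 < q" "q \<le> 1"
  defines "S \<equiv> some_fully_sampled F"
  shows "covering_weight F * (1 - measure_pmf.prob (bernoulli_sample I q) S)
    \<le> measure_pmf.expectation (bernoulli_sample I q)
        (\<lambda>X. (estimator q X - total_weight) * indicator S X)"
proof -
  let ?E = "measure_pmf.expectation (bernoulli_sample I q)"
  let ?P = "measure_pmf.prob (bernoulli_sample I q) S"
  let ?Y = "\<lambda>t X. of_bool (\<forall>v\<in>V t. X v) :: real"
  have "covering_weight F * (1 - ?P) = (\<Sum>t\<in>T. w t * (of_bool (\<exists>A\<in>F. A \<subseteq> V t) * (1 - ?P)))"
    unfolding covering_weight_eq_sum_of_bool by (simp add: sum_distrib_right mult.assoc)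
  also have "\<dots> \<le> (\<Sum>t\<in>T. w t * (?E (\<lambda>X. ?Y t X * indicator S X) / q ^ k - ?P))"
    using q unfolding S_def
    by (intro sum_mono mult_left_mono w_nonneg expectation_fully_sampled_on_event_ge)
  also have "\<dots> = (\<Sum>t\<in>T. w t * ?E (\<lambda>X. ?Y t X * indicator S X) / q ^ k) - total_weight * ?P"
    unfolding total_weight_def by (simp add: sum_distrib_right sum_subtractf right_diff_distrib)
  also have "\<dots> = ?E (\<lambda>X. (estimator q X - total_weight) * indicator S X)"
  proof -
    have "(estimator q X - total_weight) * indicator S X
        = (\<Sum>t\<in>T. w t * (?Y t X * indicator S X) / q ^ k) - total_weight * indicator S X" for X
      unfolding estimator_eq_sum left_diff_distrib sum_distrib_right by (simp add: mult_ac)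
    then show ?thesis
      using q by (simp add: finite_I Bochner_Integration.integral_sum)
  qed
  finally show ?thesis .
qed

lemma covering_weight_le_deviation:
  assumes q: "0 < q" "q \<le> 1" and N: "0 < total_weight" and \<delta>: "0 < \<delta>"
    and F: "finite F" "\<And>A. A \<in> F \<Longrightarrow> A \<subseteq> I"
  shows "covering_weight F * (1 - (\<Sum>A\<in>F. q ^ card A)) \<le> total_weight * (\<delta> + deviation_prob q \<delta>)"
proof -
  have "covering_weight F * (1 - (\<Sum>A\<in>F. q ^ card A))
      \<le> covering_weight F * (1 - measure_pmf.prob (bernoulli_sample I q) (some_fully_sampled F))"
    using q F
    by (intro mult_left_mono covering_weight_nonneg diff_left_mono prob_some_fully_sampled_le
        finite_I) auto
  also have "\<dots> \<le> measure_pmf.expectation (bernoulli_sample I q)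
      (\<lambda>X. (estimator q X - total_weight) * indicator (some_fully_sampled F) X)"
    by (rule covering_weight_shortfall_le[OF q])
  also have "\<dots> \<le> total_weight * (\<delta> + deviation_prob q \<delta>)"
    unfolding deviation_prob_def using q N \<delta>
    by (intro expectation_excess_on_event_le finite_set_pmf_bernoulli_sample finite_I
        estimator_nonneg expectation_estimator) auto
  finally show ?thesis .
qed

lemma heavy_set_prob_le:
  assumes q: "0 < q" "q \<le> q0" "q0 < 1" and N: "0 < total_weight" and \<epsilon>: "0 < \<epsilon>" and \<delta>: "0 < \<delta>"
    and small: "\<delta> + deviation_prob q \<delta> \<le> (1 - q0) * \<epsilon> / 4"
    and A: "A \<in> heavy_sets q \<epsilon>"
  shows "q ^ card A \<le> 1/4"
proof -
  have A_heavy: "A \<subseteq> I" "1 \<le> card A" "\<epsilon> * q ^ card A * total_weight < covering_weight {A}"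
    using A unfolding heavy_sets_def by auto
  have "q ^ card A \<le> q ^ 1"
    using q A_heavy(2) by (intro power_decreasing) auto
  then have "covering_weight {A} * (1 - q0) \<le> covering_weight {A} * (1 - (\<Sum>B\<in>{A}. q ^ card B))"
    using q by (intro mult_left_mono covering_weight_nonneg) auto
  also have "\<dots> \<le> total_weight * (\<delta> + deviation_prob q \<delta>)"
    using q A_heavy(1) by (intro covering_weight_le_deviation N \<delta>) auto
  also have "\<dots> \<le> total_weight * ((1 - q0) * \<epsilon> / 4)"
    using small N by (intro mult_left_mono) auto
  finally have "covering_weight {A} * (1 - q0) \<le> (total_weight * \<epsilon> / 4) * (1 - q0)"
    by (simp add: algebra_simps)
  then have "covering_weight {A} \<le> total_weight * \<epsilon> / 4"
    by (rule mult_right_le_imp_le) (use q in simp)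
  then have "q ^ card A * (\<epsilon> * total_weight) < 1/4 * (\<epsilon> * total_weight)"
    using A_heavy(3) by (simp add: mult_ac)
  then have "q ^ card A < 1/4"
    by (rule mult_right_less_imp_less) (use \<epsilon> N in simp)
  then show ?thesis
    by simp
qed

lemma light_group_weight_le:
  assumes q: "0 < q" "q \<le> 1" and N: "0 < total_weight" and \<delta>: "0 < \<delta>"
    and F: "finite F" "\<And>A. A \<in> F \<Longrightarrow> A \<subseteq> I" and light: "(\<Sum>A\<in>F. q ^ card A) \<le> 1/2"
  shows "(\<Sum>A\<in>F. covering_weight {A}) \<le> 2 ^ (k + 1) * total_weight * (\<delta> + deviation_prob q \<delta>)"
proof -
  have "covering_weight F * (1/2) \<le> covering_weight F * (1 - (\<Sum>A\<in>F. q ^ card A))"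
    using light by (intro mult_left_mono covering_weight_nonneg) auto
  also have "\<dots> \<le> total_weight * (\<delta> + deviation_prob q \<delta>)"
    by (rule covering_weight_le_deviation[OF q N \<delta> F])
  finally have "covering_weight F \<le> 2 * (total_weight * (\<delta> + deviation_prob q \<delta>))"
    by simp
  from mult_left_mono[OF this, of "2 ^ k"]
  have "2 ^ k * covering_weight F \<le> 2 ^ (k + 1) * total_weight * (\<delta> + deviation_prob q \<delta>)"
    by (simp add: mult_ac)
  with sum_covering_weight_singletons_le[OF F(1)] show ?thesis
    by linarith
qed

lemma sum_heavy_set_probs_le:
  assumes "0 < total_weight" "0 < \<epsilon>"
  shows "(\<Sum>A\<in>heavy_sets q \<epsilon>. q ^ card A) \<le> 2 ^ k / \<epsilon>"
proof -
  have "(\<Sum>A\<in>heavy_sets q \<epsilon>. q ^ card A) \<le> (\<Sum>A\<in>heavy_sets q \<epsilon>. covering_weight {A} / (\<epsilon> * total_weight))"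
  proof (intro sum_mono)
    fix A assume "A \<in> heavy_sets q \<epsilon>"
    then have "q ^ card A * (\<epsilon> * total_weight) \<le> covering_weight {A}"
      unfolding heavy_sets_def by (simp add: mult_ac)
    then show "q ^ card A \<le> covering_weight {A} / (\<epsilon> * total_weight)"
      using assms by (simp add: pos_le_divide_eq)
  qed
  also have "\<dots> \<le> 2 ^ k * covering_weight (heavy_sets q \<epsilon>) / (\<epsilon> * total_weight)"
    using assms sum_covering_weight_singletons_le[OF finite_heavy_sets]
    by (simp add: sum_divide_distrib[symmetric] divide_right_mono)
  also have "\<dots> \<le> 2 ^ k / \<epsilon>"
    using assms covering_weight_le_total_weight by (simp add: field_simps)
  finally show ?thesis .
qed

theorem heavy_mass_le:
  assumes q: "0 < q" "q \<le> q0" "q0 < 1" and N: "0 < total_weight" and \<epsilon>: "0 < \<epsilon>" and \<delta>: "0 < \<delta>"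
    and small: "\<delta> + deviation_prob q \<delta> \<le> (1 - q0) * \<epsilon> / 4"
  shows "heavy_mass q \<epsilon> / total_weight \<le> (4 * 2 ^ k / \<epsilon> + 1) * 2 ^ (k + 1) * (\<delta> + deviation_prob q \<delta>)"
proof -
  define D where "D = \<delta> + deviation_prob q \<delta>"
  have D: "0 \<le> D"
    unfolding D_def deviation_prob_def using \<delta> by simp
  have "heavy_mass q \<epsilon> \<le> (4 * (\<Sum>A\<in>heavy_sets q \<epsilon>. q ^ card A) + 1) * (2 ^ (k + 1) * total_weight * D)"
    unfolding heavy_mass_def D_def
  proof (rule sum_le_by_light_subsets[OF finite_heavy_sets])
    show "0 \<le> q ^ card A \<and> q ^ card A \<le> 1/4" if "A \<in> heavy_sets q \<epsilon>" for A
      using q heavy_set_prob_le[OF q N \<epsilon> \<delta> small that] by simp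
    show "(\<Sum>A\<in>F. covering_weight {A}) \<le> 2 ^ (k + 1) * total_weight * (\<delta> + deviation_prob q \<delta>)"
      if "F \<subseteq> heavy_sets q \<epsilon>" "(\<Sum>A\<in>F. q ^ card A) \<le> 1/2" for F
      using q N \<delta> that finite_subset[OF that(1) finite_heavy_sets]
      by (intro light_group_weight_le) (auto simp: heavy_sets_def)
  qed (use N D D_def in simp)
  also have "\<dots> \<le> (4 * (2 ^ k / \<epsilon>) + 1) * (2 ^ (k + 1) * total_weight * D)"
  proof (rule mult_right_mono)
    show "4 * (\<Sum>A\<in>heavy_sets q \<epsilon>. q ^ card A) + 1 \<le> 4 * (2 ^ k / \<epsilon>) + 1"
      using sum_heavy_set_probs_le[OF N \<epsilon>, where q = q] by linarith
  qed (use N D in simp)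
  finally show ?thesis
    using N unfolding D_def by (simp add: divide_le_eq mult_ac)
qed

end

section \<open>Subgraph counts\<close>

lemma prod_if_eq_of_bool:
  "finite A \<Longrightarrow> (\<Prod>x\<in>A. if P x then 1 else 0) = (of_bool (\<forall>x\<in>A. P x) :: 'b::comm_semiring_1)"
  by (induction A rule: finite_induct) auto

definition copy_weight ::
    "nat \<Rightarrow> (nat \<Rightarrow> nat \<Rightarrow> bool) \<Rightarrow> (nat \<Rightarrow> nat \<Rightarrow> bool) \<Rightarrow> (nat \<Rightarrow> nat) \<Rightarrow> real" where
  "copy_weight k h a s = MH k h a s / real (aut_count k h)"

lemma weighted_ksets_tuples:
  "weighted_ksets {1..m} (tuples k m) (\<lambda>s. s ` {1..k}) k (copy_weight k h a)"
proof
  have "tuples k m \<subseteq> {1..k} \<rightarrow>\<^sub>E {1..m}"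
    unfolding tuples_def by auto
  then show "finite (tuples k m)"
    by (rule finite_subset) (auto intro: finite_PiE)
  show "s ` {1..k} \<subseteq> {1..m}" and "card (s ` {1..k}) = k" if "s \<in> tuples k m" for s
    using that unfolding tuples_def by (auto simp: card_image)
  show "0 \<le> copy_weight k h a s" for s
    unfolding copy_weight_def MH_def
    by (intro divide_nonneg_nonneg prod_nonneg) (auto split: prod.splits)
qed simp

definition HT_error_prob ::
    "nat \<Rightarrow> (nat \<Rightarrow> nat \<Rightarrow> bool) \<Rightarrow> nat \<Rightarrow> (nat \<Rightarrow> nat \<Rightarrow> bool) \<Rightarrow> real \<Rightarrow> real \<Rightarrow> real" where
  "HT_error_prob k h m a p \<delta> =
    measure_pmf.prob (sampling m p) {X. \<bar>HT_est k h m a p X / NHG k h m a - 1\<bar> > \<delta>}"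

definition heavy_local_mass ::
    "nat \<Rightarrow> (nat \<Rightarrow> nat \<Rightarrow> bool) \<Rightarrow> nat \<Rightarrow> (nat \<Rightarrow> nat \<Rightarrow> bool) \<Rightarrow> real \<Rightarrow> real \<Rightarrow> real" where
  "heavy_local_mass k h m a p \<epsilon> = (1 / NHG k h m a) *
    (\<Sum>A\<in>{A. A \<subseteq> {1..m} \<and> 1 \<le> card A \<and> card A \<le> k}.
       local_count k h m a A * (if local_count k h m a A > \<epsilon> * p ^ card A * NHG k h m a then 1 else 0))"

context
  fixes k :: nat and h :: "nat \<Rightarrow> nat \<Rightarrow> bool" and m :: nat and a :: "nat \<Rightarrow> nat \<Rightarrow> bool"
begin

interpretation G: weighted_ksets "{1..m}" "tuples k m" "\<lambda>s. s ` {1..k}" k "copy_weight k h a"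
  by (rule weighted_ksets_tuples)

lemma NHG_eq_total_weight: "NHG k h m a = G.total_weight"
  unfolding NHG_def G.total_weight_def copy_weight_def by (simp add: sum_divide_distrib)

lemma local_count_eq_covering_weight: "local_count k h m a A = G.covering_weight {A}"
  unfolding local_count_def G.covering_weight_def copy_weight_def by (simp add: sum_divide_distrib)

lemma HT_est_eq_estimator: "HT_est k h m a p X = G.estimator p X"
proof -
  have "(\<Prod>u\<in>{1..k}. if X (s u) then 1 else 0) = (of_bool (\<forall>v\<in>s ` {1..k}. X v) :: real)" for s
    by (simp add: prod_if_eq_of_bool)
  then show ?thesis
    unfolding HT_est_def THG_def G.estimator_def copy_weight_def
    by (simp add: sum_divide_distrib)
qed

lemma HT_error_prob_eq_deviation_prob: "HT_error_prob k h m a p \<delta> = G.deviation_prob p \<delta>"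
  unfolding HT_error_prob_def G.deviation_prob_def sampling_def HT_est_eq_estimator
    NHG_eq_total_weight ..

lemma heavy_local_mass_eq: "heavy_local_mass k h m a p \<epsilon> = G.heavy_mass p \<epsilon> / G.total_weight"
  unfolding heavy_local_mass_def G.heavy_mass_def G.heavy_sets_def
    local_count_eq_covering_weight NHG_eq_total_weight
  by (simp add: of_bool_def[symmetric] Int_def conj_ac)

lemma HT_error_prob_le:
  assumes "0 < p" "p \<le> 1" "0 < NHG k h m a" "0 < \<epsilon>" "0 < \<delta>"
  shows "HT_error_prob k h m a p \<delta> \<le> 16 * 2 ^ k * \<epsilon> / \<delta>\<^sup>2 + 4 / \<delta> * heavy_local_mass k h m a p \<epsilon>"
  using G.deviation_prob_le assms
  unfolding HT_error_prob_eq_deviation_prob heavy_local_mass_eq NHG_eq_total_weight by blast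

lemma heavy_local_mass_le:
  assumes "0 < p" "p \<le> q0" "q0 < 1" "0 < NHG k h m a" "0 < \<epsilon>" "0 < \<delta>"
    and "\<delta> + HT_error_prob k h m a p \<delta> \<le> (1 - q0) * \<epsilon> / 4"
  shows "heavy_local_mass k h m a p \<epsilon>
    \<le> (4 * 2 ^ k / \<epsilon> + 1) * 2 ^ (k + 1) * (\<delta> + HT_error_prob k h m a p \<delta>)"
  using G.heavy_mass_le assms
  unfolding HT_error_prob_eq_deviation_prob heavy_local_mass_eq NHG_eq_total_weight by blast

end

lemma HT_error_prob_nonneg: "0 \<le> HT_error_prob k h m a p \<delta>"
  unfolding HT_error_prob_def by simp

lemma heavy_local_mass_nonneg: "0 \<le> heavy_local_mass k h m a p \<epsilon>"
  unfolding heavy_local_mass_def local_count_eq_covering_weight NHG_eq_total_weight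
  using weighted_ksets.total_weight_nonneg[OF weighted_ksets_tuples]
  by (intro mult_nonneg_nonneg sum_nonneg
      weighted_ksets.covering_weight_nonneg[OF weighted_ksets_tuples]) auto

lemma HT_consistent_if_heavy_local_mass_vanishes:
  fixes m :: "nat \<Rightarrow> nat" and a :: "nat \<Rightarrow> nat \<Rightarrow> nat \<Rightarrow> bool" and p :: "nat \<Rightarrow> real"
  assumes pos: "\<forall>\<^sub>F n in sequentially. 0 < NHG k h (m n) (a n) \<and> 0 < p n \<and> p n \<le> 1"
    and heavy: "\<forall>\<epsilon>>0. (\<lambda>n. heavy_local_mass k h (m n) (a n) (p n) \<epsilon>) \<longlonglongrightarrow> 0" and \<delta>: "0 < \<delta>"
  shows "(\<lambda>n. HT_error_prob k h (m n) (a n) (p n) \<delta>) \<longlonglongrightarrow> 0"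
proof (rule tendsto_zero_by_approximation)
  show "\<forall>\<^sub>F \<epsilon> in at_right 0. \<forall>\<^sub>F n in sequentially. HT_error_prob k h (m n) (a n) (p n) \<delta>
      \<le> 16 * 2 ^ k * \<epsilon> / \<delta>\<^sup>2 + 4 / \<delta> * heavy_local_mass k h (m n) (a n) (p n) \<epsilon>"
    using eventually_at_right_less
  proof eventually_elim
    case (elim \<epsilon>)
    from pos show ?case
      by eventually_elim (rule HT_error_prob_le; use elim \<delta> in auto)
  qed
  show "((\<lambda>\<epsilon>. 16 * 2 ^ k * \<epsilon> / \<delta>\<^sup>2) \<longlongrightarrow> 0) (at_right 0)"
    using \<delta> by (auto intro!: tendsto_eq_intros)
  show "\<forall>\<^sub>F \<epsilon> in at_right 0. (\<lambda>n. 4 / \<delta> * heavy_local_mass k h (m n) (a n) (p n) \<epsilon>) \<longlonglongrightarrow> 0"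
    using eventually_at_right_less
    by eventually_elim (rule tendsto_mult_right_zero, use heavy in auto)
qed (rule HT_error_prob_nonneg)

lemma heavy_local_mass_vanishes_if_HT_consistent:
  fixes m :: "nat \<Rightarrow> nat" and a :: "nat \<Rightarrow> nat \<Rightarrow> nat \<Rightarrow> bool" and p :: "nat \<Rightarrow> real"
  assumes q0: "q0 < 1" and pos: "\<forall>\<^sub>F n in sequentially. 0 < NHG k h (m n) (a n) \<and> 0 < p n \<and> p n \<le> q0"
    and consistent: "\<forall>\<delta>>0. (\<lambda>n. HT_error_prob k h (m n) (a n) (p n) \<delta>) \<longlonglongrightarrow> 0" and \<epsilon>: "0 < \<epsilon>"
  shows "(\<lambda>n. heavy_local_mass k h (m n) (a n) (p n) \<epsilon>) \<longlonglongrightarrow> 0"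
proof -
  define C :: real where "C = (4 * 2 ^ k / \<epsilon> + 1) * 2 ^ (k + 1)"
  have "0 < (1 - q0) * \<epsilon> / 8"
    using q0 \<epsilon> by simp
  from eventually_at_right_real[OF this]
  have bound: "\<forall>\<^sub>F \<delta> in at_right 0. \<forall>\<^sub>F n in sequentially. heavy_local_mass k h (m n) (a n) (p n) \<epsilon>
      \<le> C * \<delta> + C * HT_error_prob k h (m n) (a n) (p n) \<delta>"
  proof eventually_elim
    case (elim \<delta>)
    then have "\<forall>\<^sub>F n in sequentially. HT_error_prob k h (m n) (a n) (p n) \<delta> < \<delta>"
      using consistent by (auto intro: order_tendstoD)
    with pos show ?case
    proof eventually_elim
      case (elim n)
      then show ?case
        using \<open>\<delta> \<in> _\<close> q0 \<epsilon> heavy_local_mass_le[of "p n" q0 k h "m n" "a n" \<epsilon> \<delta>]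
        unfolding C_def by (simp add: distrib_left)
    qed
  qed
  show ?thesis
  proof (rule tendsto_zero_by_approximation[OF _ bound])
    show "((\<lambda>\<delta>. C * \<delta>) \<longlongrightarrow> 0) (at_right 0)"
      by (auto intro!: tendsto_eq_intros)
    show "\<forall>\<^sub>F \<delta> in at_right 0. (\<lambda>n. C * HT_error_prob k h (m n) (a n) (p n) \<delta>) \<longlonglongrightarrow> 0"
      using eventually_at_right_less
      by eventually_elim (rule tendsto_mult_right_zero, use consistent in auto)
  qed (rule heavy_local_mass_nonneg)
qed

theorem theorem2p2:
  fixes m :: "nat \<Rightarrow> nat" and a :: "nat \<Rightarrow> nat \<Rightarrow> nat \<Rightarrow> bool"
    and k :: nat and h :: "nat \<Rightarrow> nat \<Rightarrow> bool" and p :: "nat \<Rightarrow> real"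
  assumes G_simple: "\<forall>n\<ge>1. simple_graph (m n) (a n)"
    and m_lim: "filterlim m at_top sequentially"
    and N_pos: "\<forall>n\<ge>1. NHG k h (m n) (a n) > 0"
    and H_conn: "connected_graph k h"
    and p_range: "\<forall>n\<ge>1. 0 < p n \<and> p n < 1"
    and p_limsup: "limsup (\<lambda>n. ereal (p n)) < 1"
  shows "(\<forall>\<epsilon>>0. (\<lambda>n. measure_pmf.prob (sampling (m n) (p n))
              {X. \<bar>HT_est k h (m n) (a n) (p n) X / NHG k h (m n) (a n) - 1\<bar> > \<epsilon>})
            \<longlonglongrightarrow> 0)
    \<longleftrightarrow>
    (\<forall>\<epsilon>>0. (\<lambda>n. (1 / NHG k h (m n) (a n)) *
              (\<Sum>A\<in>{A. A \<subseteq> {1..m n} \<and> 1 \<le> card A \<and> card A \<le> k}.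
                 local_count k h (m n) (a n) A *
                 (if local_count k h (m n) (a n) A > \<epsilon> * p n ^ card A * NHG k h (m n) (a n)
                  then 1 else 0)))
            \<longlonglongrightarrow> 0)"
proof -
  obtain q0 where q0: "q0 < 1" "\<forall>\<^sub>F n in sequentially. p n < q0"
    using p_limsup unfolding one_ereal_def by (rule limsup_less_imp_eventually_less)
  have eventually_pos: "\<forall>\<^sub>F n in sequentially. 0 < NHG k h (m n) (a n) \<and> 0 < p n \<and> p n \<le> q0"
    using q0(2) eventually_ge_at_top[of 1] by eventually_elim (use N_pos p_range in auto)
  then have "\<forall>\<^sub>F n in sequentially. 0 < NHG k h (m n) (a n) \<and> 0 < p n \<and> p n \<le> 1"
    by eventually_elim (use q0(1) in auto)
  then show ?thesis
    unfolding HT_error_prob_def[symmetric] heavy_local_mass_def[symmetric]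
    using HT_consistent_if_heavy_local_mass_vanishes
      heavy_local_mass_vanishes_if_HT_consistent[OF q0(1) eventually_pos]
    by blast
qed

end
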